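(* Fix $\vartheta_1\in(0,\pi/2)$ and an integer $k\ge0$. Let $\eta_k$ be the unique solution of $\tan\eta=\eta$ in $k\pi\le\eta<k\pi+\pi/2$, and set $\eta_k'=\eta_k-k\pi$. (1) If $\vartheta_1<\eta_k'$, then on $I_k$ the function $\Phi$ decreases from $\Phi(\vartheta_1+k\pi)=k\pi$ to $\Phi(\eta_k)\ge0$ and then increases to $\Phi((k+1)\pi-\vartheta_1)=(k+1)\pi$. (2) If $\vartheta_1\ge\eta_k'$, then $\Phi$ increases on $I_k$ from $\Phi(\vartheta_1+k\pi)=k\pi$ to $\Phi((k+1)\pi-\vartheta_1)=(k+1)\pi$.
   Context: For integers $k\ge0$ let $I_k=[\vartheta_1+k\pi,(k+1)\pi-\vartheta_1]$. For $\eta\in I_k$ set $\gamma(\eta)=\sqrt{1-\sin^2\vartheta_1/\sin^2\eta}$ and $$\Phi(\eta)=-\eta\,\gamma(\eta)+k\pi+\arccos\Big(\frac{\cos(\eta-k\pi)}{\cos\vartheta_1}\Big),\qquad\arccos\in[0,\pi].$$ *)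

theory Defs
  imports Complex_Main
begin

definition gam :: "real \<Rightarrow> real \<Rightarrow> real" where
  "gam \<theta>1 \<eta> = sqrt (1 - (sin \<theta>1)^2 / (sin \<eta>)^2)"

definition Phi :: "real \<Rightarrow> nat \<Rightarrow> real \<Rightarrow> real" where
  "Phi \<theta>1 k \<eta> = - \<eta> * gam \<theta>1 \<eta> + real k * pi
      + arccos (cos (\<eta> - real k * pi) / cos \<theta>1)"

definition eta :: "nat \<Rightarrow> real" where
  "eta k = (THE x. real k * pi \<le> x \<and> x < real k * pi + pi / 2 \<and> tan x = x)"

end

theory Submission
  imports Defs
begin

text \<open>
  Shift to \<open>t = \<eta> - k\<pi>\<close> with \<open>K = k\<pi>\<close>. A direct computation gives
  \<open>\<Phi>'(t) = sin\<^sup>2\<theta>\<^sub>1 (sin t - (t + K) cos t) / (sin\<^sup>2t \<surd>(sin\<^sup>2t - sin\<^sup>2\<theta>\<^sub>1))\<close>,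
  and the numerator has derivative \<open>(t + K) sin t > 0\<close>, so it changes sign exactly once on
  \<open>[0, \<pi>]\<close>, at the root \<open>\<eta>\<^sub>k - K\<close> of \<open>tan(t + K) = t + K\<close>.
  At the turning point, \<open>\<alpha> = arccos(cos t / cos \<theta>\<^sub>1) < t\<close> satisfies
  \<open>\<Phi> = K - (tan \<alpha> - \<alpha>)\<close>, which is nonnegative because \<open>tan x - x\<close> increases
  and equals \<open>K\<close> at \<open>x = t\<close>.
\<close>

lemma abs_sin_less_abs_sin_iff:
  fixes a t :: real
  shows "\<bar>sin a\<bar> < \<bar>sin t\<bar> \<longleftrightarrow> \<bar>cos t\<bar> < \<bar>cos a\<bar>"
proof -
  have "\<bar>sin a\<bar> < \<bar>sin t\<bar> \<longleftrightarrow> (sin a)^2 < (sin t)^2"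
    using abs_le_square_iff[of "sin t" "sin a"] by linarith
  also have "\<dots> \<longleftrightarrow> (cos t)^2 < (cos a)^2"
    by (simp add: sin_squared_eq)
  also have "\<dots> \<longleftrightarrow> \<bar>cos t\<bar> < \<bar>cos a\<bar>"
    using abs_le_square_iff[of "cos a" "cos t"] by linarith
  finally show ?thesis .
qed

lemma abs_cos_le_cos:
  assumes "0 \<le> a" "a \<le> t" "t \<le> pi - a"
  shows "\<bar>cos t\<bar> \<le> cos a"
proof -
  have "cos t \<le> cos a" using assms by (intro cos_monotone_0_pi_le) auto
  moreover have "cos (pi - a) \<le> cos t" using assms by (intro cos_monotone_0_pi_le) auto
  ultimately show ?thesis by simp
qed

lemma abs_cos_less_cos:
  assumes "0 \<le> a" "a < t" "t < pi - a"
  shows "\<bar>cos t\<bar> < cos a"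
proof -
  have "cos t < cos a" using assms by (intro cos_monotone_0_pi) auto
  moreover have "cos (pi - a) < cos t" using assms by (intro cos_monotone_0_pi) auto
  ultimately show ?thesis by simp
qed

lemma sin_less_sin:
  assumes "0 < a" "a < t" "t < pi - a"
  shows "sin a < sin t"
proof -
  have "0 < sin a" "0 < sin t" "0 < cos a" using assms
    by (auto intro!: sin_gt_zero cos_gt_zero_pi)
  moreover have "\<bar>cos t\<bar> < cos a" using assms by (intro abs_cos_less_cos) auto
  ultimately show ?thesis using abs_sin_less_abs_sin_iff[of a t] by simp
qed

lemma sqrt_one_minus_sin_ratio:
  assumes "0 < sin t"
  shows "sqrt (1 - (sin a)^2 / (sin t)^2) = sqrt ((sin t)^2 - (sin a)^2) / sin t"
proof -
  have "1 - (sin a)^2 / (sin t)^2 = ((sin t)^2 - (sin a)^2) / (sin t)^2"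
    using assms by (simp add: field_simps)
  then show ?thesis using assms by (simp add: real_sqrt_divide)
qed

lemma sqrt_one_minus_cos_ratio:
  assumes "0 < cos a"
  shows "sqrt (1 - (cos t / cos a)^2) = sqrt ((sin t)^2 - (sin a)^2) / cos a"
proof -
  have "1 - (cos t / cos a)^2 = ((sin t)^2 - (sin a)^2) / (cos a)^2"
    using assms by (simp add: field_simps sin_squared_eq)
  then show ?thesis using assms by (simp add: real_sqrt_divide)
qed

lemma tan_minus_self_strict_mono:
  assumes "0 \<le> a" "a < b" "b < pi/2"
  shows "tan a - a < tan b - b"
proof (rule DERIV_pos_imp_increasing_open[OF \<open>a < b\<close>])
  fix x assume x: "a < x" "x < b"
  have "0 < cos x" "cos x < 1"
    using x assms by (auto intro: cos_gt_zero_pi cos_monotone_0_pi[of 0 x, simplified])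
  then have "0 < inverse ((cos x)^2) - 1"
    by (simp add: field_simps power_less_one_iff)
  moreover have "((\<lambda>x. tan x - x) has_real_derivative inverse ((cos x)^2) - 1) (at x)"
    using \<open>0 < cos x\<close> by (intro derivative_intros DERIV_tan) auto
  ultimately show "\<exists>y. ((\<lambda>x. tan x - x) has_real_derivative y) (at x) \<and> 0 < y" by blast
next
  have "cos x \<noteq> 0" if "x \<in> {a..b}" for x
    using that assms cos_gt_zero_pi[of x] by auto
  then show "continuous_on {a..b} (\<lambda>x. tan x - x)" by (intro continuous_intros) auto
qed

definition tan_gap :: "real \<Rightarrow> real \<Rightarrow> real" where
  "tan_gap K t = sin t - (t + K) * cos t"

lemma tan_gap_strict_mono:
  assumes "0 \<le> K" "0 \<le> a" "a < b" "b \<le> pi"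
  shows "tan_gap K a < tan_gap K b"
proof (rule DERIV_pos_imp_increasing_open[OF \<open>a < b\<close>])
  fix x assume "a < x" "x < b"
  then have "0 < x + K" "0 < sin x" using assms by (auto intro: sin_gt_zero)
  then have "0 < (x + K) * sin x" by simp
  moreover have "(tan_gap K has_real_derivative (x + K) * sin x) (at x)"
    unfolding tan_gap_def by (rule derivative_eq_intros refl | simp add: algebra_simps)+
  ultimately show "\<exists>y. (tan_gap K has_real_derivative y) (at x) \<and> 0 < y" by blast
next
  show "continuous_on {a..b} (tan_gap K)" unfolding tan_gap_def by (intro continuous_intros)
qed

lemma tan_eq_self_iff_tan_gap_eq_0:
  assumes "0 \<le> t" "t < pi/2"
  shows "tan (t + real k * pi) = t + real k * pi \<longleftrightarrow> tan_gap (real k * pi) t = 0"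
proof -
  have "0 < cos t" using assms by (intro cos_gt_zero_pi) auto
  moreover have "tan (t + real k * pi) = tan t" by simp
  ultimately show ?thesis by (auto simp: tan_gap_def tan_def divide_eq_eq)
qed

lemma tan_gap_root_ex1:
  assumes "0 \<le> K"
  shows "\<exists>!t. 0 \<le> t \<and> t < pi/2 \<and> tan_gap K t = 0"
proof -
  have "tan_gap K 0 \<le> 0" "0 \<le> tan_gap K (pi/2)"
    using assms by (simp_all add: tan_gap_def)
  moreover have "\<forall>x. 0 \<le> x \<and> x \<le> pi/2 \<longrightarrow> isCont (tan_gap K) x"
    unfolding tan_gap_def by (intro allI impI continuous_intros)
  ultimately obtain t where t: "0 \<le> t" "t \<le> pi/2" "tan_gap K t = 0"
    using IVT[of "tan_gap K" 0 0 "pi/2"] by auto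
  moreover have "tan_gap K (pi/2) = 1" by (simp add: tan_gap_def)
  then have "t \<noteq> pi/2" using t(3) by (metis zero_neq_one)
  ultimately have "0 \<le> t \<and> t < pi/2 \<and> tan_gap K t = 0" by simp
  moreover have "u = t" if "0 \<le> u" "u < pi/2" "tan_gap K u = 0" for u
    using tan_gap_strict_mono[OF assms, of u t] tan_gap_strict_mono[OF assms, of t u] that t
    by (cases u t rule: linorder_cases) auto
  ultimately show ?thesis by blast
qed

lemma eta_bounds_and_root:
  shows "real k * pi \<le> eta k" "eta k < real k * pi + pi/2"
    and "tan_gap (real k * pi) (eta k - real k * pi) = 0"
proof -
  obtain t where t: "0 \<le> t \<and> t < pi/2 \<and> tan_gap (real k * pi) t = 0"
    and t_unique: "\<And>u. 0 \<le> u \<and> u < pi/2 \<and> tan_gap (real k * pi) u = 0 \<Longrightarrow> u = t"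
    using tan_gap_root_ex1[of "real k * pi"] by auto
  have "\<exists>!x. real k * pi \<le> x \<and> x < real k * pi + pi/2 \<and> tan x = x"
  proof (rule ex1I[of _ "t + real k * pi"])
    fix x assume "real k * pi \<le> x \<and> x < real k * pi + pi/2 \<and> tan x = x"
    then show "x = t + real k * pi"
      using t_unique[of "x - real k * pi"] tan_eq_self_iff_tan_gap_eq_0[of "x - real k * pi" k]
      by auto
  qed (use t tan_eq_self_iff_tan_gap_eq_0[of t k] in auto)
  then have "real k * pi \<le> eta k \<and> eta k < real k * pi + pi/2 \<and> tan (eta k) = eta k"
    unfolding eta_def by (rule theI')
  then show "real k * pi \<le> eta k" "eta k < real k * pi + pi/2"
    and "tan_gap (real k * pi) (eta k - real k * pi) = 0"
    using tan_eq_self_iff_tan_gap_eq_0[of "eta k - real k * pi" k] by auto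
qed

definition Phi_reduced :: "real \<Rightarrow> real \<Rightarrow> real \<Rightarrow> real" where
  "Phi_reduced th K t = - (t + K) * sqrt (1 - (sin th)^2 / (sin t)^2) + K + arccos (cos t / cos th)"

lemma Phi_eq_Phi_reduced: "Phi th k x = Phi_reduced th (real k * pi) (x - real k * pi)"
proof -
  have "(sin x)^2 = (sin (x - real k * pi))^2"
    by (simp add: sin_diff power_mult_distrib flip: power_mult)
  then show ?thesis by (simp add: Phi_def gam_def Phi_reduced_def)
qed

lemma has_real_derivative_sqrt_one_minus_sin_ratio:
  assumes "0 < a" "a < t" "t < pi - a"
  shows "((\<lambda>t. sqrt (1 - (sin a)^2 / (sin t)^2)) has_real_derivative
           (sin a)^2 * cos t / ((sin t)^2 * sqrt ((sin t)^2 - (sin a)^2))) (at t)"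
proof -
  define R where "R = sqrt ((sin t)^2 - (sin a)^2)"
  have sin_t: "0 < sin t" using assms by (intro sin_gt_zero) auto
  have "0 < R" unfolding R_def
    using sin_less_sin[OF assms] sin_gt_zero[of a] assms by (simp add: power_strict_mono)
  have root_eq: "sqrt (1 - (sin a)^2 / (sin t)^2) = R / sin t"
    unfolding R_def using sin_t by (rule sqrt_one_minus_sin_ratio)
  have "0 < 1 - (sin a)^2 / (sin t)^2"
    using root_eq sin_t \<open>0 < R\<close> by (metis divide_pos_pos real_sqrt_gt_0_iff)
  moreover have "((\<lambda>t. 1 - (sin a)^2 / (sin t)^2) has_real_derivative
          (sin a)^2 * (2 * sin t * cos t) / ((sin t)^2)^2) (at t)"
    by (rule derivative_eq_intros refl | use sin_t in \<open>simp add: field_simps power2_eq_square\<close>)+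
  ultimately have "((\<lambda>t. sqrt (1 - (sin a)^2 / (sin t)^2)) has_real_derivative
          inverse (sqrt (1 - (sin a)^2 / (sin t)^2)) / 2
            * ((sin a)^2 * (2 * sin t * cos t) / ((sin t)^2)^2)) (at t)"
    by (rule DERIV_chain2[OF DERIV_real_sqrt])
  then show ?thesis
    unfolding root_eq R_def[symmetric]
    by (rule DERIV_cong) (use sin_t \<open>0 < R\<close> in \<open>simp add: field_simps power2_eq_square\<close>)
qed

lemma has_real_derivative_arccos_cos_ratio:
  assumes "0 < a" "a < t" "t < pi - a"
  shows "((\<lambda>t. arccos (cos t / cos a)) has_real_derivative
           sin t / sqrt ((sin t)^2 - (sin a)^2)) (at t)"
proof -
  have cos_a: "0 < cos a" using assms by (intro cos_gt_zero_pi) auto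
  have "\<bar>cos t\<bar> < cos a" using assms by (intro abs_cos_less_cos) auto
  then have "-1 < cos t / cos a" "cos t / cos a < 1"
    using cos_a by (auto simp: field_simps abs_less_iff)
  moreover have "((\<lambda>t. cos t / cos a) has_real_derivative - sin t / cos a) (at t)"
    using DERIV_cdivide[OF DERIV_cos] by simp
  ultimately have "((\<lambda>t. arccos (cos t / cos a)) has_real_derivative
          inverse (- sqrt (1 - (cos t / cos a)^2)) * (- sin t / cos a)) (at t)"
    by (rule DERIV_chain2[OF DERIV_arccos])
  then show ?thesis
    unfolding sqrt_one_minus_cos_ratio[OF cos_a]
    by (rule DERIV_cong) (use cos_a in \<open>simp add: field_simps\<close>)
qed

lemma Phi_reduced_has_real_derivative:
  assumes "0 < th" "th < t" "t < pi - th"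
  shows "(Phi_reduced th K has_real_derivative
           (sin th)^2 * tan_gap K t / ((sin t)^2 * sqrt ((sin t)^2 - (sin th)^2))) (at t)"
proof -
  define R where "R = sqrt ((sin t)^2 - (sin th)^2)"
  have sin_t: "0 < sin t" using assms by (intro sin_gt_zero) auto
  have "0 < R" unfolding R_def
    using sin_less_sin[OF assms] sin_gt_zero[of th] assms by (simp add: power_strict_mono)
  have d_lin: "((\<lambda>t. - (t + K)) has_real_derivative -1) (at t)"
    by (rule derivative_eq_intros refl | simp)+
  have "(Phi_reduced th K has_real_derivative
          -1 * sqrt (1 - (sin th)^2 / (sin t)^2)
            + (sin th)^2 * cos t / ((sin t)^2 * R) * - (t + K) + 0 + sin t / R) (at t)"
    unfolding Phi_reduced_def[abs_def] R_def
    by (rule DERIV_add[OF DERIV_add[OF DERIV_mult[OF d_lin] DERIV_const]]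
        has_real_derivative_sqrt_one_minus_sin_ratio[OF assms]
        has_real_derivative_arccos_cos_ratio[OF assms])+
  moreover have "-1 * sqrt (1 - (sin th)^2 / (sin t)^2)
            + (sin th)^2 * cos t / ((sin t)^2 * R) * - (t + K) + 0 + sin t / R
      = (sin th)^2 * tan_gap K t / ((sin t)^2 * R)"
  proof -
    have "R^2 = (sin t)^2 - (sin th)^2" using \<open>0 < R\<close> unfolding R_def by simp
    then show ?thesis
      unfolding sqrt_one_minus_sin_ratio[OF sin_t] R_def[symmetric] using sin_t \<open>0 < R\<close>
      by (simp add: tan_gap_def field_simps power2_eq_square) algebra
  qed
  ultimately show ?thesis unfolding R_def by simp
qed

lemma Phi_reduced_derivative_sign:
  assumes "0 < th" "th < t" "t < pi - th"
  obtains q where "0 < q" "(Phi_reduced th K has_real_derivative tan_gap K t * q) (at t)"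
proof
  define q where "q = (sin th)^2 / ((sin t)^2 * sqrt ((sin t)^2 - (sin th)^2))"
  have "0 < sin th" "sin th < sin t" using assms by (auto intro: sin_gt_zero sin_less_sin)
  then show "0 < q" unfolding q_def by (simp add: power_strict_mono)
  show "(Phi_reduced th K has_real_derivative tan_gap K t * q) (at t)"
    using Phi_reduced_has_real_derivative[OF assms, of K] by (simp add: q_def mult.commute)
qed

lemma continuous_on_Phi_reduced:
  assumes "0 < th" "th < pi/2"
  shows "continuous_on {th..pi - th} (Phi_reduced th K)"
proof -
  have cos_th: "0 < cos th" using assms by (intro cos_gt_zero_pi) auto
  have "sin t \<noteq> 0 \<and> -1 \<le> cos t / cos th \<and> cos t / cos th \<le> 1" if "t \<in> {th..pi - th}" for t
  proof -
    have "0 < sin t" using that assms by (intro sin_gt_zero) auto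
    moreover have "\<bar>cos t\<bar> \<le> cos th" using that assms by (intro abs_cos_le_cos) auto
    ultimately show ?thesis using cos_th by (auto simp: field_simps abs_le_iff)
  qed
  then show ?thesis unfolding Phi_reduced_def
    by (intro continuous_intros continuous_on_arccos) (use cos_th in auto)
qed

lemma Phi_reduced_left_endpoint:
  assumes "0 < th" "th < pi/2"
  shows "Phi_reduced th K th = K"
  using assms sin_gt_zero[of th] cos_gt_zero_pi[of th] by (simp add: Phi_reduced_def)

lemma Phi_reduced_right_endpoint:
  assumes "0 < th" "th < pi/2"
  shows "Phi_reduced th K (pi - th) = K + pi"
  using assms sin_gt_zero[of th] cos_gt_zero_pi[of th] by (simp add: Phi_reduced_def)

lemma Phi_reduced_strict_mono:
  assumes "0 < th" "th < pi/2" "0 \<le> K" "tan_gap K t0 = 0" "0 \<le> t0"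
    and "t0 \<le> a" "th \<le> a" "a < b" "b \<le> pi - th"
  shows "Phi_reduced th K a < Phi_reduced th K b"
proof (rule DERIV_pos_imp_increasing_open[OF \<open>a < b\<close>])
  fix x assume x: "a < x" "x < b"
  have "0 < tan_gap K x" using tan_gap_strict_mono[of K t0 x] assms x by auto
  moreover obtain q where "0 < q" "(Phi_reduced th K has_real_derivative tan_gap K x * q) (at x)"
    using Phi_reduced_derivative_sign[of th x] x assms by auto
  ultimately show "\<exists>y. (Phi_reduced th K has_real_derivative y) (at x) \<and> 0 < y"
    by (auto intro!: mult_pos_pos)
next
  show "continuous_on {a..b} (Phi_reduced th K)"
    using assms by (auto intro: continuous_on_subset[OF continuous_on_Phi_reduced])
qed

lemma Phi_reduced_strict_antimono:
  assumes "0 < th" "th < pi/2" "0 \<le> K" "tan_gap K t0 = 0" "t0 < pi/2"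
    and "th \<le> a" "a < b" "b \<le> t0"
  shows "Phi_reduced th K b < Phi_reduced th K a"
proof (rule DERIV_neg_imp_decreasing_open[OF \<open>a < b\<close>])
  fix x assume x: "a < x" "x < b"
  have "tan_gap K x < 0" using tan_gap_strict_mono[of K x t0] assms x by auto
  moreover obtain q where "0 < q" "(Phi_reduced th K has_real_derivative tan_gap K x * q) (at x)"
    using Phi_reduced_derivative_sign[of th x] x assms by auto
  ultimately show "\<exists>y. (Phi_reduced th K has_real_derivative y) (at x) \<and> y < 0"
    by (auto simp: mult_neg_pos)
next
  show "continuous_on {a..b} (Phi_reduced th K)"
    using assms by (auto intro: continuous_on_subset[OF continuous_on_Phi_reduced])
qed

lemma Phi_reduced_nonneg_at_root:
  assumes "0 < th" "tan_gap K t0 = 0" "th < t0" "t0 < pi/2"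
  shows "0 \<le> Phi_reduced th K t0"
proof -
  define R where "R = sqrt ((sin t0)^2 - (sin th)^2)"
  define \<alpha> where "\<alpha> = arccos (cos t0 / cos th)"
  have cos_th: "0 < cos th" "cos th < 1"
    using assms by (auto intro: cos_gt_zero_pi cos_monotone_0_pi[of 0 th, simplified])
  have cos_t0: "0 < cos t0" "cos t0 < cos th"
    using assms by (auto intro: cos_gt_zero_pi cos_monotone_0_pi)
  have sin_t0: "0 < sin t0" using assms by (intro sin_gt_zero) auto
  have ratio: "0 < cos t0 / cos th" "cos t0 / cos th < 1" "cos t0 < cos t0 / cos th"
    using cos_th cos_t0 by (auto simp: field_simps)
  have "0 \<le> \<alpha>" using ratio unfolding \<alpha>_def by (intro arccos_lbound) auto
  have "\<alpha> < arccos (cos t0)"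
    using ratio cos_t0 unfolding \<alpha>_def by (intro arccos_less_arccos) auto
  then have "\<alpha> < t0" using assms by (simp add: arccos_cos)
  have "cos \<alpha> = cos t0 / cos th" using ratio unfolding \<alpha>_def by (simp add: cos_arccos)
  moreover have "sin \<alpha> = R / cos th"
    using ratio unfolding \<alpha>_def R_def sqrt_one_minus_cos_ratio[OF cos_th(1), symmetric]
    by (simp add: sin_arccos)
  ultimately have tan_\<alpha>: "tan \<alpha> = R / cos t0"
    using cos_th by (simp add: tan_def)
  have tan_t0: "tan t0 = t0 + K"
    using assms(2) cos_t0 by (simp add: tan_def tan_gap_def field_simps)
  have "(t0 + K) * (R / sin t0) = tan \<alpha>"
    unfolding tan_t0[symmetric] tan_\<alpha> using sin_t0 by (simp add: tan_def)
  then have "Phi_reduced th K t0 = K + \<alpha> - tan \<alpha>"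
    unfolding Phi_reduced_def sqrt_one_minus_sin_ratio[OF sin_t0] R_def[symmetric] \<alpha>_def[symmetric]
    by (simp only: mult_minus_left)
  moreover have "tan \<alpha> - \<alpha> < tan t0 - t0"
    using \<open>0 \<le> \<alpha>\<close> \<open>\<alpha> < t0\<close> assms by (intro tan_minus_self_strict_mono)
  ultimately show ?thesis using tan_t0 by simp
qed

lemma Phi_left_endpoint:
  assumes "0 < th" "th < pi/2"
  shows "Phi th k (th + real k * pi) = real k * pi"
  using Phi_reduced_left_endpoint[OF assms] by (simp add: Phi_eq_Phi_reduced)

lemma Phi_right_endpoint:
  assumes "0 < th" "th < pi/2"
  shows "Phi th k ((real k + 1) * pi - th) = (real k + 1) * pi"
proof -
  have "(real k + 1) * pi - th - real k * pi = pi - th" by (simp add: algebra_simps)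
  then show ?thesis
    using Phi_reduced_right_endpoint[OF assms] by (simp add: Phi_eq_Phi_reduced algebra_simps)
qed

lemma Phi_strict_antimono_before_eta:
  assumes "0 < th" "th < pi/2" "th + real k * pi \<le> x" "x < y" "y \<le> eta k"
  shows "Phi th k y < Phi th k x"
  using Phi_reduced_strict_antimono[OF assms(1,2) _ eta_bounds_and_root(3)[of k],
      where a = "x - real k * pi" and b = "y - real k * pi"]
    eta_bounds_and_root(2)[of k] assms
  by (simp add: Phi_eq_Phi_reduced)

lemma Phi_strict_mono_after_eta:
  assumes "0 < th" "th < pi/2" "eta k \<le> x" "th + real k * pi \<le> x" "x < y"
    and "y \<le> (real k + 1) * pi - th"
  shows "Phi th k x < Phi th k y"
  using Phi_reduced_strict_mono[OF assms(1,2) _ eta_bounds_and_root(3)[of k],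
      where a = "x - real k * pi" and b = "y - real k * pi"]
    eta_bounds_and_root(1)[of k] assms
  by (simp add: Phi_eq_Phi_reduced algebra_simps)

lemma Phi_eta_nonneg:
  assumes "0 < th" "th < eta k - real k * pi"
  shows "0 \<le> Phi th k (eta k)"
  using Phi_reduced_nonneg_at_root[OF assms(1) eta_bounds_and_root(3)[of k] assms(2)]
    eta_bounds_and_root(2)[of k]
  by (simp add: Phi_eq_Phi_reduced)

theorem lemma5p14:
  fixes \<theta>1 :: real and k :: nat
  assumes "0 < \<theta>1" and "\<theta>1 < pi / 2"
  shows "Phi \<theta>1 k (\<theta>1 + real k * pi) = real k * pi
    \<and> Phi \<theta>1 k ((real k + 1) * pi - \<theta>1) = (real k + 1) * pi
    \<and> (\<theta>1 < eta k - real k * pi \<longrightarrow>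
          (\<forall>x\<in>{\<theta>1 + real k * pi .. eta k}. \<forall>y\<in>{\<theta>1 + real k * pi .. eta k}.
              x < y \<longrightarrow> Phi \<theta>1 k y < Phi \<theta>1 k x)
        \<and> (\<forall>x\<in>{eta k .. (real k + 1) * pi - \<theta>1}. \<forall>y\<in>{eta k .. (real k + 1) * pi - \<theta>1}.
              x < y \<longrightarrow> Phi \<theta>1 k x < Phi \<theta>1 k y)
        \<and> 0 \<le> Phi \<theta>1 k (eta k))
    \<and> (eta k - real k * pi \<le> \<theta>1 \<longrightarrow>
          (\<forall>x\<in>{\<theta>1 + real k * pi .. (real k + 1) * pi - \<theta>1}.
           \<forall>y\<in>{\<theta>1 + real k * pi .. (real k + 1) * pi - \<theta>1}.
              x < y \<longrightarrow> Phi \<theta>1 k x < Phi \<theta>1 k y))"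
  using Phi_left_endpoint[OF assms] Phi_right_endpoint[OF assms]
    Phi_strict_antimono_before_eta[OF assms] Phi_strict_mono_after_eta[OF assms]
    Phi_eta_nonneg[OF assms(1)]
  by fastforce

end
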